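(* Every strongly sofic monoid is surjunctive.
   Context: A monoid $M$ is strongly sofic if for every finite subset $K \subset M$ there exists an integer $\Delta_K \geq 1$ such that for every $\varepsilon > 0$ there exist a non-empty finite set $D$ and a map $\sigma \colon M \to \operatorname{Map}(D)$ (where $\operatorname{Map}(D)$ is the set of all maps $D \to D$ with composition) satisfying: (1) $\sigma(1_M) = \mathrm{Id}_D$; (2) $d_D^{\mathrm{Ham}}(\sigma(k_1k_2),\sigma(k_1)\sigma(k_2)) \leq \varepsilon$ for all $k_1,k_2 \in K$; (3) $d_D^{\mathrm{Ham}}(\sigma(k_1),\sigma(k_2)) \geq 1-\varepsilon$ for all distinct $k_1,k_2 \in K$; (4) $|\sigma(k)^{-1}(v)| \leq \Delta_K$ for all $k \in K$ and $v \in D$. Here $d_D^{\mathrm{Ham}}(f,g) = \frac{1}{|D|}|\{v \in D : f(v) \neq g(v)\}|$ is the Hamming metric. For a monoid $M$ and a finite set $A$, $A^M$ is the set of all maps $M \to A$ with the prodiscrete (product of discrete) topology and the shift action of $M$ given by $(mx)(m') = x(m'm)$ for $m,m' \in M$, $x \in A^M$. A cellular automaton is a continuous $M$-equivariant map $\tau \colon A^M \to A^M$. A monoid $M$ is surjunctive if for every finite set $A$, every injective cellular automaton $\tau \colon A^M \to A^M$ is surjective. *)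

theory Defs
  imports "HOL-Analysis.Analysis"
begin

definition ham :: "nat set \<Rightarrow> (nat \<Rightarrow> nat) \<Rightarrow> (nat \<Rightarrow> nat) \<Rightarrow> real" where
  "ham D f g = real (card {v \<in> D. f v \<noteq> g v}) / real (card D)"

(* Strongly sofic monoid; the finite sets D are taken as finite sets of naturals
   (every finite set is in bijection with one). *)
definition strongly_sofic :: "'m::monoid_mult itself \<Rightarrow> bool" where
  "strongly_sofic _ \<longleftrightarrow>
    (\<forall>K :: 'm set. finite K \<longrightarrow>
      (\<exists>\<Delta>::nat. \<Delta> \<ge> 1 \<and>
        (\<forall>\<epsilon>::real. \<epsilon> > 0 \<longrightarrow>
          (\<exists>(D::nat set) (\<sigma>::'m \<Rightarrow> nat \<Rightarrow> nat).
             finite D \<and> D \<noteq> {} \<and>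
             (\<forall>m. \<sigma> m \<in> D \<rightarrow> D) \<and>
             (\<forall>v\<in>D. \<sigma> 1 v = v) \<and>
             (\<forall>k1\<in>K. \<forall>k2\<in>K. ham D (\<sigma> (k1 * k2)) (\<sigma> k1 \<circ> \<sigma> k2) \<le> \<epsilon>) \<and>
             (\<forall>k1\<in>K. \<forall>k2\<in>K. k1 \<noteq> k2 \<longrightarrow> ham D (\<sigma> k1) (\<sigma> k2) \<ge> 1 - \<epsilon>) \<and>
             (\<forall>k\<in>K. \<forall>v\<in>D. card {u \<in> D. \<sigma> k u = v} \<le> \<Delta>)))))"

definition configs :: "'b set \<Rightarrow> ('m \<Rightarrow> 'b) set" where
  "configs A = (UNIV :: 'm set) \<rightarrow> A"

definition prodiscrete :: "'b set \<Rightarrow> ('m \<Rightarrow> 'b) topology" where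
  "prodiscrete A = product_topology (\<lambda>_. discrete_topology A) UNIV"

definition shift :: "'m::monoid_mult \<Rightarrow> ('m \<Rightarrow> 'b) \<Rightarrow> ('m \<Rightarrow> 'b)" where
  "shift m x = (\<lambda>m'. x (m' * m))"

definition cellular_automaton ::
    "'b set \<Rightarrow> (('m::monoid_mult \<Rightarrow> 'b) \<Rightarrow> ('m \<Rightarrow> 'b)) \<Rightarrow> bool" where
  "cellular_automaton A \<tau> \<longleftrightarrow>
     \<tau> \<in> configs A \<rightarrow> configs A \<and>
     continuous_map (prodiscrete A) (prodiscrete A) \<tau> \<and>
     (\<forall>m. \<forall>x \<in> configs A. \<tau> (shift m x) = shift m (\<tau> x))"

(* Surjunctive monoid; finite alphabets are taken as finite sets of naturals. *)
definition surjunctive :: "'m::monoid_mult itself \<Rightarrow> bool" where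
  "surjunctive _ \<longleftrightarrow>
    (\<forall>(A::nat set) (\<tau>::('m \<Rightarrow> nat) \<Rightarrow> ('m \<Rightarrow> nat)).
       finite A \<longrightarrow> cellular_automaton A \<tau> \<longrightarrow> inj_on \<tau> (configs A) \<longrightarrow>
       \<tau> ` configs A = configs A)"

end

theory Submission
  imports Defs
begin

text \<open>
  Suppose the cellular automaton \<open>\<tau>\<close> is injective but misses a configuration \<open>y\<close>. By
  compactness of \<open>A\<^sup>M\<close>, \<open>\<tau>\<close> has a finite memory set \<open>S\<close>, the value \<open>x 1\<close> is determined by
  \<open>\<tau> x\<close> on a finite set \<open>N\<close>, and every \<open>\<tau> x\<close> differs from \<open>y\<close> somewhere on a finite set \<open>\<Omega>\<close>.
  Take a sofic approximation \<open>\<sigma>\<close> of \<open>K = S \<union> N \<union> \<Omega>\<close> on a finite set \<open>D\<close>, and let \<open>\<tau>\<close> act on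
  \<open>A\<^sup>D\<close> by letting every vertex \<open>v\<close> read the configuration \<open>m \<mapsto> z (\<sigma> m v)\<close>. On the set \<open>G\<close>
  of vertices where \<open>\<sigma>\<close> is multiplicative and injective on \<open>K\<close> this finite map recovers
  \<open>z\<close>, so it has at least \<open>|A|\<^bsup>|G|\<^esup>\<close> values. None of these values shows the pattern
  \<open>y\<close> on \<open>\<Omega>\<close> along the \<open>\<Omega>\<close>-orbit of a vertex of \<open>G\<close>. Since the fibres of \<open>\<sigma>\<close> have at most
  \<open>\<Delta>\<close> points, a set \<open>V\<close> containing a fraction \<open>1 / (|\<Omega>|\<^sup>2 \<Delta>)\<close> of \<open>G\<close> has pairwise
  disjoint orbits, which caps the number of values at \<open>|A|\<^bsup>|D|\<^esup> (1 - |A|\<^bsup>-|\<Omega>|\<^esup>)\<^bsup>|V|\<^esup>\<close>.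
  As \<open>D - G\<close> is an arbitrarily small fraction of \<open>D\<close>, the two bounds are incompatible.
\<close>

section \<open>Finitely determined maps on compact spaces\<close>

lemma compact_space_finite_subcover_pred:
  assumes "compact_space X" and "\<And>i. openin X {x \<in> topspace X. P i x}"
    and "\<And>x. x \<in> topspace X \<Longrightarrow> \<exists>i. P i x"
  obtains F where "finite F" and "\<And>x. x \<in> topspace X \<Longrightarrow> \<exists>i\<in>F. P i x"
proof -
  define U where "U i = {x \<in> topspace X. P i x}" for i
  have "\<forall>B\<in>range U. openin X B" and "topspace X \<subseteq> \<Union>(range U)"
    using assms(2,3) unfolding U_def by auto
  then obtain \<F> where "finite \<F>" "\<F> \<subseteq> range U" "topspace X \<subseteq> \<Union>\<F>"
    using assms(1) unfolding compact_space_alt by meson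
  then obtain F where "finite F" "\<F> = U ` F"
    by (meson finite_subset_image)
  with \<open>topspace X \<subseteq> \<Union>\<F>\<close> show thesis
    using that unfolding U_def by blast
qed

lemma openin_discrete_valued_relation:
  assumes "continuous_map X (discrete_topology A) f" and "continuous_map X (discrete_topology B) g"
  shows "openin X {x \<in> topspace X. R (f x) (g x)}"
proof -
  have fg: "continuous_map X (discrete_topology (A \<times> B)) (\<lambda>x. (f x, g x))"
    using assms by (simp add: prod_topology_discrete_topology continuous_map_pairedI)
  have "openin X {x \<in> topspace X. (f x, g x) \<in> {(a, b) \<in> A \<times> B. R a b}}"
    by (rule openin_continuous_map_preimage[OF fg]) auto
  also have "{x \<in> topspace X. (f x, g x) \<in> {(a, b) \<in> A \<times> B. R a b}} = {x \<in> topspace X. R (f x) (g x)}"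
    using continuous_map_image_subset_topspace[OF fg] by auto
  finally show ?thesis .
qed

lemma finitely_determined_if_determined:
  fixes \<phi> :: "'i \<Rightarrow> 'a \<Rightarrow> 'b" and \<psi> :: "'a \<Rightarrow> 'c"
  assumes "compact_space X"
    and "\<And>i. continuous_map X (discrete_topology A) (\<phi> i)"
    and "continuous_map X (discrete_topology B) \<psi>"
    and "\<And>x x'. x \<in> topspace X \<Longrightarrow> x' \<in> topspace X \<Longrightarrow> (\<And>i. \<phi> i x = \<phi> i x') \<Longrightarrow> \<psi> x = \<psi> x'"
  obtains F where "finite F"
    and "\<And>x x'. x \<in> topspace X \<Longrightarrow> x' \<in> topspace X \<Longrightarrow> (\<And>i. i \<in> F \<Longrightarrow> \<phi> i x = \<phi> i x') \<Longrightarrow> \<psi> x = \<psi> x'"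
proof -
  let ?X2 = "prod_topology X X"
  define P where "P j p = (case j of None \<Rightarrow> \<psi> (fst p) = \<psi> (snd p) | Some i \<Rightarrow> \<phi> i (fst p) \<noteq> \<phi> i (snd p))"
    for j p
  (* The pairs on which \<psi> agrees (j = None) or some \<phi> i differs (j = Some i)
     form open sets covering X \<times> X. *)
  have "compact_space ?X2"
    using assms(1) by (simp add: compact_space_prod_topology)
  moreover have "openin ?X2 {p \<in> topspace ?X2. P j p}" for j
  proof (cases j)
    case None
    then show ?thesis
      using openin_discrete_valued_relation[where R="(=)",
          OF continuous_map_compose[OF continuous_map_fst assms(3)]
             continuous_map_compose[OF continuous_map_snd assms(3)]]
      by (simp add: P_def o_def)
  next
    case (Some i)
    then show ?thesis
      using openin_discrete_valued_relation[where R="(\<noteq>)",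
          OF continuous_map_compose[OF continuous_map_fst assms(2)]
             continuous_map_compose[OF continuous_map_snd assms(2)]]
      by (simp add: P_def o_def)
  qed
  moreover have "\<exists>j. P j p" if "p \<in> topspace ?X2" for p
  proof (cases "\<exists>i. \<phi> i (fst p) \<noteq> \<phi> i (snd p)")
    case True
    then obtain i where "\<phi> i (fst p) \<noteq> \<phi> i (snd p)" ..
    then have "P (Some i) p"
      by (simp add: P_def)
    then show ?thesis ..
  next
    case False
    then have "\<psi> (fst p) = \<psi> (snd p)"
      using assms(4) that by (simp add: mem_Times_iff)
    then have "P None p"
      by (simp add: P_def)
    then show ?thesis ..
  qed
  ultimately obtain F where "finite F" and F: "\<And>p. p \<in> topspace ?X2 \<Longrightarrow> \<exists>j\<in>F. P j p"
    by (rule compact_space_finite_subcover_pred) auto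
  show thesis
  proof (rule that)
    show "finite (Some -` F)"
      using \<open>finite F\<close> by (simp add: finite_vimageI)
    fix x x' assume "x \<in> topspace X" "x' \<in> topspace X" "\<And>i. i \<in> Some -` F \<Longrightarrow> \<phi> i x = \<phi> i x'"
    then show "\<psi> x = \<psi> x'"
      using F[of "(x, x')"] unfolding P_def by (auto split: option.splits)
  qed
qed

section \<open>Cellular automata\<close>

lemma topspace_prodiscrete [simp]: "topspace (prodiscrete A) = configs A"
  by (simp add: prodiscrete_def configs_def PiE_UNIV_domain)

lemma compact_space_prodiscrete: "finite A \<Longrightarrow> compact_space (prodiscrete A)"
  by (simp add: prodiscrete_def compact_space_product_topology compact_space_discrete_topology)

lemma continuous_map_prodiscrete_eval:
  "continuous_map (prodiscrete A) (discrete_topology A) (\<lambda>x. x m)"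
  unfolding prodiscrete_def
  using continuous_map_product_projection[of m UNIV "\<lambda>_. discrete_topology A"] by simp

lemma continuous_map_cellular_automaton_eval:
  assumes "cellular_automaton A \<tau>"
  shows "continuous_map (prodiscrete A) (discrete_topology A) (\<lambda>x. \<tau> x m)"
proof -
  have "continuous_map (prodiscrete A) (prodiscrete A) \<tau>"
    using assms by (simp add: cellular_automaton_def)
  from continuous_map_compose[OF this continuous_map_prodiscrete_eval] show ?thesis
    by (simp add: o_def)
qed

lemma cellular_automaton_in_configs:
  "cellular_automaton A \<tau> \<Longrightarrow> x \<in> configs A \<Longrightarrow> \<tau> x \<in> configs A"
  unfolding cellular_automaton_def by blast

lemma shift_in_configs: "x \<in> configs A \<Longrightarrow> shift m x \<in> configs A"
  unfolding configs_def shift_def by auto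

lemma cellular_automaton_apply_eq_shift:
  assumes "cellular_automaton A \<tau>" and "x \<in> configs A"
  shows "\<tau> x m = \<tau> (shift m x) 1"
  using assms unfolding cellular_automaton_def by (simp add: shift_def)

lemma configs_card_le_one:
  assumes "finite A" and "card A \<le> 1" and "x \<in> configs A" and "x' \<in> configs A"
  shows "x = x'"
proof
  fix m
  have "x m \<in> A" and "x' m \<in> A"
    using assms(3,4) unfolding configs_def by auto
  with assms(2) card_le_Suc0_iff_eq[OF assms(1)] show "x m = x' m"
    by simp
qed

lemma cellular_automaton_surj_if_card_le_one:
  fixes \<tau> :: "('m::monoid_mult \<Rightarrow> 'b) \<Rightarrow> ('m \<Rightarrow> 'b)"
  assumes "finite A" and "card A \<le> 1" and "cellular_automaton A \<tau>"
  shows "\<tau> ` configs A = configs A"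
proof
  show "\<tau> ` configs A \<subseteq> configs A"
    using cellular_automaton_in_configs[OF assms(3)] by blast
  show "configs A \<subseteq> \<tau> ` configs A"
  proof
    fix x :: "'m \<Rightarrow> 'b"
    assume "x \<in> configs A"
    moreover from this have "\<tau> x = x"
      using configs_card_le_one[OF assms(1,2)] cellular_automaton_in_configs[OF assms(3)] by blast
    ultimately show "x \<in> \<tau> ` configs A"
      by (metis image_eqI)
  qed
qed

definition memory_set :: "'b set \<Rightarrow> (('m::monoid_mult \<Rightarrow> 'b) \<Rightarrow> ('m \<Rightarrow> 'b)) \<Rightarrow> 'm set \<Rightarrow> bool" where
  "memory_set A \<tau> S \<longleftrightarrow>
     (\<forall>x\<in>configs A. \<forall>x'\<in>configs A. (\<forall>s\<in>S. x s = x' s) \<longrightarrow> \<tau> x 1 = \<tau> x' 1)"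

definition inverse_memory_set ::
    "'b set \<Rightarrow> (('m::monoid_mult \<Rightarrow> 'b) \<Rightarrow> ('m \<Rightarrow> 'b)) \<Rightarrow> 'm set \<Rightarrow> bool" where
  "inverse_memory_set A \<tau> N \<longleftrightarrow>
     (\<forall>x\<in>configs A. \<forall>x'\<in>configs A. (\<forall>n\<in>N. \<tau> x n = \<tau> x' n) \<longrightarrow> x 1 = x' 1)"

lemma memory_setD:
  "memory_set A \<tau> S \<Longrightarrow> x \<in> configs A \<Longrightarrow> x' \<in> configs A \<Longrightarrow> (\<And>s. s \<in> S \<Longrightarrow> x s = x' s) \<Longrightarrow>
    \<tau> x 1 = \<tau> x' 1"
  unfolding memory_set_def by blast

lemma inverse_memory_setD:
  "inverse_memory_set A \<tau> N \<Longrightarrow> x \<in> configs A \<Longrightarrow> x' \<in> configs A \<Longrightarrow>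
    (\<And>n. n \<in> N \<Longrightarrow> \<tau> x n = \<tau> x' n) \<Longrightarrow> x 1 = x' 1"
  unfolding inverse_memory_set_def by blast

lemma cellular_automaton_finite_memory_set:
  assumes "finite A" and "cellular_automaton A \<tau>"
  obtains S where "finite S" and "memory_set A \<tau> S"
proof (rule finitely_determined_if_determined[where \<phi>="\<lambda>s x. x s" and \<psi>="\<lambda>x. \<tau> x 1"])
  show "compact_space (prodiscrete A)"
    using assms(1) by (rule compact_space_prodiscrete)
  show "continuous_map (prodiscrete A) (discrete_topology A) (\<lambda>x. x s)" for s
    by (rule continuous_map_prodiscrete_eval)
  show "continuous_map (prodiscrete A) (discrete_topology A) (\<lambda>x. \<tau> x 1)"
    using assms(2) by (rule continuous_map_cellular_automaton_eval)
  show "\<tau> x 1 = \<tau> x' 1" if "\<And>s. x s = x' s" for x x'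
    using that by (metis ext)
  fix S
  assume "finite S"
    and "\<And>x x'. x \<in> topspace (prodiscrete A) \<Longrightarrow> x' \<in> topspace (prodiscrete A) \<Longrightarrow>
           (\<And>s. s \<in> S \<Longrightarrow> x s = x' s) \<Longrightarrow> \<tau> x 1 = \<tau> x' 1"
  then show thesis
    using that unfolding memory_set_def topspace_prodiscrete by blast
qed

lemma injective_cellular_automaton_finite_inverse_memory_set:
  assumes "finite A" and "cellular_automaton A \<tau>" and "inj_on \<tau> (configs A)"
  obtains N where "finite N" and "inverse_memory_set A \<tau> N"
proof (rule finitely_determined_if_determined[where \<phi>="\<lambda>n x. \<tau> x n" and \<psi>="\<lambda>x. x 1"])
  show "compact_space (prodiscrete A)"
    using assms(1) by (rule compact_space_prodiscrete)
  show "continuous_map (prodiscrete A) (discrete_topology A) (\<lambda>x. \<tau> x n)" for n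
    using assms(2) by (rule continuous_map_cellular_automaton_eval)
  show "continuous_map (prodiscrete A) (discrete_topology A) (\<lambda>x. x 1)"
    by (rule continuous_map_prodiscrete_eval)
  show "x 1 = x' 1" if "x \<in> topspace (prodiscrete A)" "x' \<in> topspace (prodiscrete A)"
    and "\<And>n. \<tau> x n = \<tau> x' n" for x x'
  proof -
    have "\<tau> x = \<tau> x'"
      using that(3) by (rule ext)
    then show ?thesis
      using that(1,2) assms(3) by (simp add: inj_on_eq_iff)
  qed
  fix N
  assume "finite N"
    and "\<And>x x'. x \<in> topspace (prodiscrete A) \<Longrightarrow> x' \<in> topspace (prodiscrete A) \<Longrightarrow>
           (\<And>n. n \<in> N \<Longrightarrow> \<tau> x n = \<tau> x' n) \<Longrightarrow> x 1 = x' 1"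
  then show thesis
    using that unfolding inverse_memory_set_def topspace_prodiscrete by blast
qed

lemma cellular_automaton_finite_missing_window:
  assumes "finite A" and "cellular_automaton A \<tau>" and "y \<notin> \<tau> ` configs A"
  obtains \<Omega> where "finite \<Omega>" and "\<forall>x\<in>configs A. \<exists>w\<in>\<Omega>. \<tau> x w \<noteq> y w"
proof (rule compact_space_finite_subcover_pred)
  show "compact_space (prodiscrete A)"
    using assms(1) by (rule compact_space_prodiscrete)
  show "openin (prodiscrete A) {x \<in> topspace (prodiscrete A). \<tau> x w \<noteq> y w}" for w
    using openin_discrete_valued_relation[where R="(\<noteq>)" and B="{y w}",
        OF continuous_map_cellular_automaton_eval[OF assms(2)]]
    by simp
  show "\<exists>w. \<tau> x w \<noteq> y w" if "x \<in> topspace (prodiscrete A)" for x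
    using that assms(3) by (metis ext image_eqI topspace_prodiscrete)
qed (use that in simp)

section \<open>Counting\<close>

lemma bounded_degree_independent_set:
  fixes R :: "'a \<Rightarrow> 'a \<Rightarrow> bool"
  assumes "finite G" and "\<And>v. v \<in> G \<Longrightarrow> R v v" and "\<And>u v. R u v \<Longrightarrow> R v u"
    and "\<And>v. v \<in> G \<Longrightarrow> card {u \<in> G. R v u} \<le> L"
  shows "\<exists>V \<subseteq> G. (\<forall>u\<in>V. \<forall>v\<in>V. R u v \<longrightarrow> u = v) \<and> card G \<le> L * card V"
  using assms(1,2,4)
proof (induction G rule: finite_psubset_induct)
  case (psubset G)
  show ?case
  proof (cases "G = {}")
    case False
    then obtain v where v: "v \<in> G" by blast
    define G' where "G' = {u \<in> G. \<not> R v u}"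
    have "G' \<subset> G"
      using v psubset.prems(1) unfolding G'_def by blast
    moreover have "card {u \<in> G'. R w u} \<le> L" if "w \<in> G'" for w
    proof -
      have "card {u \<in> G'. R w u} \<le> card {u \<in> G. R w u}"
        using psubset.hyps by (intro card_mono) (auto simp: G'_def)
      also have "\<dots> \<le> L"
        using psubset.prems(2) that by (simp add: G'_def)
      finally show ?thesis .
    qed
    ultimately obtain V' where V': "V' \<subseteq> G'" "\<forall>u\<in>V'. \<forall>w\<in>V'. R u w \<longrightarrow> u = w"
        "card G' \<le> L * card V'"
      using psubset.IH[of G'] psubset.prems(1) unfolding G'_def by blast
    have "v \<notin> V'" and "finite V'"
      using V'(1) v psubset.prems(1) psubset.hyps unfolding G'_def by (auto intro: finite_subset)
    have "G = G' \<union> {u \<in> G. R v u}"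
      unfolding G'_def by blast
    then have "card G \<le> card G' + card {u \<in> G. R v u}"
      by (metis card_Un_le)
    also have "\<dots> \<le> L * card (insert v V')"
      using V'(3) psubset.prems(2)[OF v] \<open>v \<notin> V'\<close> \<open>finite V'\<close> by simp
    finally have "card G \<le> L * card (insert v V')" .
    moreover have "insert v V' \<subseteq> G"
      using v V'(1) unfolding G'_def by blast
    moreover have "\<forall>u\<in>insert v V'. \<forall>w\<in>insert v V'. R u w \<longrightarrow> u = w"
      using V'(1,2) assms(3) unfolding G'_def by blast
    ultimately show ?thesis
      by (intro exI[of _ "insert v V'"]) simp
  qed simp
qed

lemma card_PiE_le_card_image_if_determines:
  assumes "finite D" and "finite A" and "A \<noteq> {}" and "G \<subseteq> D"
    and determines: "\<And>z z' v. z \<in> D \<rightarrow>\<^sub>E A \<Longrightarrow> z' \<in> D \<rightarrow>\<^sub>E A \<Longrightarrow> \<Phi> z = \<Phi> z' \<Longrightarrow> v \<in> G \<Longrightarrow> z v = z' v"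
  shows "card A ^ card G \<le> card (\<Phi> ` (D \<rightarrow>\<^sub>E A))"
proof -
  obtain a where "a \<in> A"
    using assms(3) by blast
  define extend where "extend f = (\<lambda>u\<in>D. if u \<in> G then f u else a)" for f
  have extend: "extend f \<in> D \<rightarrow>\<^sub>E A" if "f \<in> G \<rightarrow>\<^sub>E A" for f
    using that \<open>a \<in> A\<close> unfolding extend_def restrict_PiE_iff by (auto intro: PiE_mem)
  have "inj_on (\<Phi> \<circ> extend) (G \<rightarrow>\<^sub>E A)"
  proof (rule inj_onI)
    fix f f' assume f: "f \<in> G \<rightarrow>\<^sub>E A" and f': "f' \<in> G \<rightarrow>\<^sub>E A" and "(\<Phi> \<circ> extend) f = (\<Phi> \<circ> extend) f'"
    then have eq: "extend f v = extend f' v" if "v \<in> G" for v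
      using determines[OF extend[OF f] extend[OF f'] _ that] by simp
    show "f = f'"
    proof (rule PiE_ext[OF f f'])
      fix v assume "v \<in> G"
      with eq[OF this] assms(4) show "f v = f' v"
        unfolding extend_def by auto
    qed
  qed
  moreover have "(\<Phi> \<circ> extend) ` (G \<rightarrow>\<^sub>E A) \<subseteq> \<Phi> ` (D \<rightarrow>\<^sub>E A)"
    using extend by auto
  moreover have "finite (\<Phi> ` (D \<rightarrow>\<^sub>E A))"
    using assms(1,2) by (simp add: finite_PiE)
  ultimately have "card (G \<rightarrow>\<^sub>E A) \<le> card (\<Phi> ` (D \<rightarrow>\<^sub>E A))"
    by (rule card_inj_on_le)
  then show ?thesis
    using assms(1,4) by (simp add: card_PiE finite_subset)
qed

lemma inj_on_restrict_windows:
  "inj_on (\<lambda>y. (restrict y (D - (\<Union>v\<in>V. e v ` \<Omega>)), \<lambda>v\<in>V. \<lambda>w\<in>\<Omega>. y (e v w))) (D \<rightarrow>\<^sub>E A)"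
proof (rule inj_onI)
  fix y y' assume y: "y \<in> D \<rightarrow>\<^sub>E A" and y': "y' \<in> D \<rightarrow>\<^sub>E A"
    and eq: "(restrict y (D - (\<Union>v\<in>V. e v ` \<Omega>)), \<lambda>v\<in>V. \<lambda>w\<in>\<Omega>. y (e v w)) =
             (restrict y' (D - (\<Union>v\<in>V. e v ` \<Omega>)), \<lambda>v\<in>V. \<lambda>w\<in>\<Omega>. y' (e v w))"
  show "y = y'"
  proof (rule PiE_ext[OF y y'])
    fix u assume "u \<in> D"
    show "y u = y' u"
    proof (cases "u \<in> (\<Union>v\<in>V. e v ` \<Omega>)")
      case True
      then obtain v w where "v \<in> V" "w \<in> \<Omega>" "u = e v w"
        by blast
      with arg_cong[OF eq, of "\<lambda>p. snd p v w"] show ?thesis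
        by simp
    next
      case False
      with arg_cong[OF eq, of "\<lambda>p. fst p u"] \<open>u \<in> D\<close> show ?thesis
        by simp
    qed
  qed
qed

lemma card_UN_disjoint_images:
  assumes "finite V" and "finite \<Omega>" and "\<And>v. v \<in> V \<Longrightarrow> inj_on (e v) \<Omega>"
    and "disjoint_family_on (\<lambda>v. e v ` \<Omega>) V"
  shows "card (\<Union>v\<in>V. e v ` \<Omega>) = card \<Omega> * card V"
proof -
  have "card (\<Union>v\<in>V. e v ` \<Omega>) = (\<Sum>v\<in>V. card (e v ` \<Omega>))"
    using assms(1,2,4) by (intro card_UN_disjoint) (auto simp: disjoint_family_on_def)
  also have "\<dots> = card \<Omega> * card V"
    using assms(3) by (simp add: card_image)
  finally show ?thesis .
qed

lemma card_pattern_avoiding_le: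
  fixes e :: "'v \<Rightarrow> 'w \<Rightarrow> 'd" and p :: "'w \<Rightarrow> 'b"
  assumes "finite D" and "finite A" and "finite \<Omega>" and "finite V"
    and Y: "Y \<subseteq> D \<rightarrow>\<^sub>E A"
    and e_inj: "\<And>v. v \<in> V \<Longrightarrow> inj_on (e v) \<Omega>"
    and e_into: "\<And>v. v \<in> V \<Longrightarrow> e v ` \<Omega> \<subseteq> D"
    and disjoint: "disjoint_family_on (\<lambda>v. e v ` \<Omega>) V"
    and p: "p \<in> \<Omega> \<rightarrow> A"
    and avoids: "\<And>y v. y \<in> Y \<Longrightarrow> v \<in> V \<Longrightarrow> \<exists>w\<in>\<Omega>. y (e v w) \<noteq> p w"
  shows "card Y * card A ^ (card \<Omega> * card V) \<le> card A ^ card D * (card A ^ card \<Omega> - 1) ^ card V"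
proof -
  define U where "U = (\<Union>v\<in>V. e v ` \<Omega>)"
  define Q where "Q = (\<Omega> \<rightarrow>\<^sub>E A) - {restrict p \<Omega>}"
  have "U \<subseteq> D"
    using e_into unfolding U_def by blast
  have card_U: "card U = card \<Omega> * card V"
    unfolding U_def using assms(4,3) e_inj disjoint by (rule card_UN_disjoint_images)
  have windows: "(\<lambda>w\<in>\<Omega>. y (e v w)) \<in> Q" if "y \<in> Y" and "v \<in> V" for y v
  proof -
    have "y \<in> D \<rightarrow>\<^sub>E A"
      using that(1) Y by blast
    then have "(\<lambda>w\<in>\<Omega>. y (e v w)) \<in> \<Omega> \<rightarrow>\<^sub>E A"
      using e_into[OF that(2)] by (auto intro: PiE_mem)
    moreover have "(\<lambda>w\<in>\<Omega>. y (e v w)) \<noteq> restrict p \<Omega>"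
      using avoids[OF that] by (metis restrict_apply')
    ultimately show ?thesis
      unfolding Q_def by blast
  qed
  have "(\<lambda>y. (restrict y (D - U), \<lambda>v\<in>V. \<lambda>w\<in>\<Omega>. y (e v w))) ` Y \<subseteq> (D - U \<rightarrow>\<^sub>E A) \<times> (V \<rightarrow>\<^sub>E Q)"
  proof (rule image_subsetI)
    fix y assume "y \<in> Y"
    then have "y \<in> D \<rightarrow>\<^sub>E A"
      using Y by blast
    then have "restrict y (D - U) \<in> D - U \<rightarrow>\<^sub>E A"
      by (auto intro: PiE_mem)
    moreover have "(\<lambda>v\<in>V. \<lambda>w\<in>\<Omega>. y (e v w)) \<in> V \<rightarrow>\<^sub>E Q"
      using windows[OF \<open>y \<in> Y\<close>] by simp
    ultimately show "(restrict y (D - U), \<lambda>v\<in>V. \<lambda>w\<in>\<Omega>. y (e v w)) \<in> (D - U \<rightarrow>\<^sub>E A) \<times> (V \<rightarrow>\<^sub>E Q)"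
      by blast
  qed
  moreover have "finite ((D - U \<rightarrow>\<^sub>E A) \<times> (V \<rightarrow>\<^sub>E Q))"
    using assms(1-4) unfolding Q_def by (simp add: finite_PiE)
  moreover have "inj_on (\<lambda>y. (restrict y (D - U), \<lambda>v\<in>V. \<lambda>w\<in>\<Omega>. y (e v w))) Y"
    using inj_on_restrict_windows Y unfolding U_def by (rule inj_on_subset)
  ultimately have "card Y \<le> card ((D - U \<rightarrow>\<^sub>E A) \<times> (V \<rightarrow>\<^sub>E Q))"
    by (intro card_inj_on_le)
  also have "\<dots> = card A ^ card (D - U) * (card A ^ card \<Omega> - 1) ^ card V"
    using p assms(1-4) unfolding Q_def by (simp add: card_cartesian_product card_PiE card_Diff_singleton)
  finally have "card Y * card A ^ card U \<le> card A ^ (card (D - U) + card U) * (card A ^ card \<Omega> - 1) ^ card V"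
    by (simp add: power_add)
  also have "card (D - U) + card U = card D"
    using assms(1) \<open>U \<subseteq> D\<close> by (metis card_Diff_subset card_mono finite_subset le_add_diff_inverse2)
  finally show ?thesis
    unfolding card_U .
qed

lemma ln_power_minus_one_less:
  fixes q r :: nat
  assumes "q \<ge> 2" and "r \<ge> 1"
  shows "real q ^ r - 1 > 0" and "ln (real q ^ r - 1) < real r * ln (real q)"
proof -
  have "real q \<le> real q ^ r"
    using power_increasing[of 1 r "real q"] assms by simp
  moreover have "real q \<ge> 2"
    using assms(1) by simp
  ultimately show "real q ^ r - 1 > 0"
    by linarith
  then have "ln (real q ^ r - 1) < ln (real q ^ r)"
    using assms(1) by (subst ln_less_cancel_iff) auto
  then show "ln (real q ^ r - 1) < real r * ln (real q)"
    using assms(1) by (simp add: ln_realpow)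
qed

lemma ln_power_count_le:
  fixes q r d g n :: nat
  assumes "q \<ge> 2" and "r \<ge> 1" and count: "q ^ g * q ^ (r * n) \<le> q ^ d * (q ^ r - 1) ^ n"
  shows "real n * (real r * ln (real q) - ln (real q ^ r - 1)) \<le> (real d - real g) * ln (real q)"
proof -
  have "real q ^ r - 1 > 0"
    using assms(1,2) by (rule ln_power_minus_one_less)
  have "real (q ^ g * q ^ (r * n)) \<le> real (q ^ d * (q ^ r - 1) ^ n)"
    using count by (simp only: of_nat_le_iff)
  then have "real q ^ g * real q ^ (r * n) \<le> real q ^ d * (real q ^ r - 1) ^ n"
    using assms(1) by (simp add: of_nat_diff)
  then have "ln (real q ^ g * real q ^ (r * n)) \<le> ln (real q ^ d * (real q ^ r - 1) ^ n)"
    using assms(1) \<open>real q ^ r - 1 > 0\<close> by (subst ln_le_cancel_iff) auto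
  then have "real g * ln (real q) + real (r * n) * ln (real q) \<le> real d * ln (real q) + real n * ln (real q ^ r - 1)"
    using assms(1) \<open>real q ^ r - 1 > 0\<close> by (simp add: ln_mult ln_realpow)
  then show ?thesis
    by (simp add: algebra_simps)
qed

lemma counting_entropy_gap:
  fixes q r L :: nat
  assumes "q \<ge> 2" and "r \<ge> 1"
  shows "\<exists>\<eta>>0. \<forall>d g b n. q ^ g * q ^ (r * n) \<le> q ^ d * (q ^ r - 1) ^ n \<longrightarrow>
           d \<le> g + b \<longrightarrow> g \<le> L * n \<longrightarrow> real b \<le> \<eta> * real d \<longrightarrow> d = 0"
proof -
  (* c = ln (q^r / (q^r - 1)) is the entropy lost on each window where one pattern is forbidden. *)
  define c where "c = real r * ln (real q) - ln (real q ^ r - 1)"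
  define s where "s = c + real L * ln (real q)"
  define \<eta> where "\<eta> = c / (2 * s)"
  have "c > 0"
    using ln_power_minus_one_less(2)[OF assms] unfolding c_def by simp
  moreover have "ln (real q) > 0"
    using assms(1) by simp
  ultimately have "s > 0"
    unfolding s_def by (simp add: add_pos_nonneg)
  have "d = 0"
    if count: "q ^ g * q ^ (r * n) \<le> q ^ d * (q ^ r - 1) ^ n"
      and "d \<le> g + b" and "g \<le> L * n" and small: "real b \<le> \<eta> * real d" for d g b n
  proof -
    have "real n * c \<le> (real d - real g) * ln (real q)"
      using ln_power_count_le[OF assms count] unfolding c_def .
    also have "\<dots> \<le> real b * ln (real q)"
      using \<open>d \<le> g + b\<close> \<open>ln (real q) > 0\<close> by (intro mult_right_mono) auto
    finally have nc: "real n * c \<le> real b * ln (real q)" .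
    have "c * real d \<le> c * (real L * real n) + c * real b"
      using \<open>d \<le> g + b\<close> \<open>g \<le> L * n\<close> \<open>c > 0\<close>
      by (simp add: distrib_left[symmetric] mult_left_mono flip: of_nat_mult of_nat_add)
    also have "\<dots> \<le> real L * (real b * ln (real q)) + c * real b"
      using mult_left_mono[OF nc, of "real L"] by (simp add: ac_simps)
    also have "\<dots> = real b * s"
      unfolding s_def by (simp add: algebra_simps)
    also have "\<dots> \<le> \<eta> * real d * s"
      using small \<open>s > 0\<close> by (simp add: mult_right_mono)
    also have "\<dots> = c * real d / 2"
      using \<open>s > 0\<close> unfolding \<eta>_def by simp
    finally show "d = 0"
      using \<open>c > 0\<close> by simp
  qed
  moreover have "\<eta> > 0"
    using \<open>c > 0\<close> \<open>s > 0\<close> unfolding \<eta>_def by simp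
  ultimately show ?thesis
    by blast
qed

section \<open>Sofic approximations\<close>

lemma card_disagree_le_ham:
  assumes "finite D" and "ham D f g \<le> \<epsilon>"
  shows "real (card {v \<in> D. f v \<noteq> g v}) \<le> \<epsilon> * real (card D)"
proof (cases "D = {}")
  case False
  with assms(1) have "real (card D) > 0"
    by (simp add: card_gt_0_iff)
  with assms(2) show ?thesis
    by (simp add: ham_def pos_divide_le_eq)
qed (use assms in \<open>simp add: ham_def\<close>)

lemma card_agree_le_ham:
  assumes "finite D" and "1 - \<epsilon> \<le> ham D f g"
  shows "real (card {v \<in> D. f v = g v}) \<le> \<epsilon> * real (card D)"
proof -
  have "card {v \<in> D. f v = g v} + card {v \<in> D. f v \<noteq> g v} = card D"
    using assms(1) by (subst card_Un_disjoint[symmetric]) (auto intro: arg_cong[where f=card])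
  moreover have "(1 - \<epsilon>) * real (card D) \<le> real (card {v \<in> D. f v \<noteq> g v})"
  proof (cases "D = {}")
    case False
    with assms(1) have "real (card D) > 0"
      by (simp add: card_gt_0_iff)
    with assms(2) show ?thesis
      by (simp add: ham_def pos_le_divide_eq)
  qed simp
  ultimately show ?thesis
    by (simp add: algebra_simps flip: of_nat_add)
qed

definition sofic_approximation ::
    "'m::monoid_mult set \<Rightarrow> nat \<Rightarrow> real \<Rightarrow> nat set \<Rightarrow> ('m \<Rightarrow> nat \<Rightarrow> nat) \<Rightarrow> bool" where
  "sofic_approximation K \<Delta> \<epsilon> D \<sigma> \<longleftrightarrow> finite D \<and> D \<noteq> {} \<and>
     (\<forall>m. \<sigma> m \<in> D \<rightarrow> D) \<and> (\<forall>v\<in>D. \<sigma> 1 v = v) \<and>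
     (\<forall>k1\<in>K. \<forall>k2\<in>K. ham D (\<sigma> (k1 * k2)) (\<sigma> k1 \<circ> \<sigma> k2) \<le> \<epsilon>) \<and>
     (\<forall>k1\<in>K. \<forall>k2\<in>K. k1 \<noteq> k2 \<longrightarrow> ham D (\<sigma> k1) (\<sigma> k2) \<ge> 1 - \<epsilon>) \<and>
     (\<forall>k\<in>K. \<forall>v\<in>D. card {u \<in> D. \<sigma> k u = v} \<le> \<Delta>)"

lemma strongly_sofic_iff:
  "strongly_sofic TYPE('m::monoid_mult) \<longleftrightarrow>
     (\<forall>K :: 'm set. finite K \<longrightarrow> (\<exists>\<Delta>\<ge>1. \<forall>\<epsilon>>0. \<exists>D \<sigma>. sofic_approximation K \<Delta> \<epsilon> D \<sigma>))"
  unfolding strongly_sofic_def sofic_approximation_def by simp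

lemma sofic_approximation_good_set:
  fixes \<sigma> :: "'m::monoid_mult \<Rightarrow> nat \<Rightarrow> nat"
  assumes "finite D" and "finite K" and "0 \<le> \<epsilon>"
    and mult: "\<And>k1 k2. k1 \<in> K \<Longrightarrow> k2 \<in> K \<Longrightarrow> ham D (\<sigma> (k1 * k2)) (\<sigma> k1 \<circ> \<sigma> k2) \<le> \<epsilon>"
    and sep: "\<And>k1 k2. k1 \<in> K \<Longrightarrow> k2 \<in> K \<Longrightarrow> k1 \<noteq> k2 \<Longrightarrow> 1 - \<epsilon> \<le> ham D (\<sigma> k1) (\<sigma> k2)"
  obtains G where "G \<subseteq> D" and "real (card (D - G)) \<le> 2 * real (card K) ^ 2 * \<epsilon> * real (card D)"
    and "\<And>v k1 k2. v \<in> G \<Longrightarrow> k1 \<in> K \<Longrightarrow> k2 \<in> K \<Longrightarrow> \<sigma> (k1 * k2) v = \<sigma> k1 (\<sigma> k2 v)"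
    and "\<And>v. v \<in> G \<Longrightarrow> inj_on (\<lambda>k. \<sigma> k v) K"
proof -
  define bad where "bad k = {v \<in> D. \<sigma> (fst k * snd k) v \<noteq> (\<sigma> (fst k) \<circ> \<sigma> (snd k)) v} \<union>
      {v \<in> D. fst k \<noteq> snd k \<and> \<sigma> (fst k) v = \<sigma> (snd k) v}" for k
  have card_bad: "real (card (bad k)) \<le> 2 * \<epsilon> * real (card D)" if "k \<in> K \<times> K" for k
  proof -
    obtain k1 k2 where k: "k = (k1, k2)" "k1 \<in> K" "k2 \<in> K"
      using \<open>k \<in> K \<times> K\<close> by auto
    have "real (card {v \<in> D. k1 \<noteq> k2 \<and> \<sigma> k1 v = \<sigma> k2 v}) \<le> \<epsilon> * real (card D)"
      using card_agree_le_ham[OF assms(1) sep[OF k(2,3)]] assms(3) by (cases "k1 = k2") simp_all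
    moreover have "real (card (bad k)) \<le> real (card {v \<in> D. \<sigma> (k1 * k2) v \<noteq> (\<sigma> k1 \<circ> \<sigma> k2) v})
        + real (card {v \<in> D. k1 \<noteq> k2 \<and> \<sigma> k1 v = \<sigma> k2 v})"
      unfolding bad_def k(1) fst_conv snd_conv of_nat_add[symmetric] of_nat_le_iff
      by (rule card_Un_le)
    ultimately show ?thesis
      using card_disagree_le_ham[OF assms(1) mult[OF k(2,3)]] by linarith
  qed
  define G where "G = D - (\<Union>k\<in>K \<times> K. bad k)"
  show thesis
  proof (rule that)
    show "G \<subseteq> D"
      unfolding G_def by blast
    have "D - G = (\<Union>k\<in>K \<times> K. bad k)"
      unfolding G_def bad_def by blast
    then have "real (card (D - G)) \<le> (\<Sum>k\<in>K \<times> K. real (card (bad k)))"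
      using assms(2) card_UN_le[of "K \<times> K" bad] by (simp flip: of_nat_sum)
    also have "\<dots> \<le> (\<Sum>k\<in>K \<times> K. 2 * \<epsilon> * real (card D))"
      using card_bad by (rule sum_mono)
    finally show "real (card (D - G)) \<le> 2 * real (card K) ^ 2 * \<epsilon> * real (card D)"
      by (simp add: card_cartesian_product power2_eq_square)
    show "\<sigma> (k1 * k2) v = \<sigma> k1 (\<sigma> k2 v)" if "v \<in> G" "k1 \<in> K" "k2 \<in> K" for v k1 k2
      using that unfolding G_def bad_def by fastforce
    show "inj_on (\<lambda>k. \<sigma> k v) K" if "v \<in> G" for v
      using that unfolding G_def bad_def inj_on_def by fastforce
  qed
qed

lemma disjoint_orbits_packing:
  fixes \<sigma> :: "'w \<Rightarrow> 'd \<Rightarrow> 'd"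
  assumes "finite D" and "G \<subseteq> D" and "finite \<Omega>" and "\<Omega> \<noteq> {}"
    and maps: "\<And>w v. w \<in> \<Omega> \<Longrightarrow> v \<in> D \<Longrightarrow> \<sigma> w v \<in> D"
    and fibres: "\<And>w u. w \<in> \<Omega> \<Longrightarrow> u \<in> D \<Longrightarrow> card {v \<in> D. \<sigma> w v = u} \<le> \<Delta>"
  obtains V where "V \<subseteq> G" and "disjoint_family_on (\<lambda>v. (\<lambda>w. \<sigma> w v) ` \<Omega>) V"
    and "card G \<le> card \<Omega> ^ 2 * \<Delta> * card V"
proof -
  define W where "W v = (\<lambda>w. \<sigma> w v) ` \<Omega>" for v
  define R where "R u v \<longleftrightarrow> W u \<inter> W v \<noteq> {}" for u v
  have "\<exists>V \<subseteq> G. (\<forall>u\<in>V. \<forall>v\<in>V. R u v \<longrightarrow> u = v) \<and> card G \<le> card \<Omega> ^ 2 * \<Delta> * card V"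
  proof (rule bounded_degree_independent_set)
    show "finite G"
      using assms(1,2) by (rule finite_subset[rotated])
    show "R v v" for v
      using assms(4) unfolding R_def W_def by blast
    show "R v u" if "R u v" for u v
      using that unfolding R_def by blast
    show "card {u \<in> G. R v u} \<le> card \<Omega> ^ 2 * \<Delta>" if "v \<in> G" for v
    proof -
      have "{u \<in> G. R v u} \<subseteq> (\<Union>(w, w')\<in>\<Omega> \<times> \<Omega>. {u \<in> D. \<sigma> w' u = \<sigma> w v})"
        using assms(2) unfolding R_def W_def by fastforce
      then have "card {u \<in> G. R v u} \<le> card (\<Union>(w, w')\<in>\<Omega> \<times> \<Omega>. {u \<in> D. \<sigma> w' u = \<sigma> w v})"
        by (rule card_mono[rotated]) (use assms(1,3) in simp)
      also have "\<dots> \<le> (\<Sum>(w, w')\<in>\<Omega> \<times> \<Omega>. card {u \<in> D. \<sigma> w' u = \<sigma> w v})"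
        using assms(3) by (simp add: card_UN_le case_prod_beta)
      also have "\<dots> \<le> (\<Sum>(w, w')\<in>\<Omega> \<times> \<Omega>. \<Delta>)"
        using that assms(2) by (intro sum_mono) (auto intro!: fibres maps)
      finally show ?thesis
        by (simp add: card_cartesian_product power2_eq_square)
    qed
  qed
  then obtain V where V: "V \<subseteq> G" "\<forall>u\<in>V. \<forall>v\<in>V. R u v \<longrightarrow> u = v"
    and "card G \<le> card \<Omega> ^ 2 * \<Delta> * card V"
    by blast
  show thesis
  proof (rule that)
    show "disjoint_family_on (\<lambda>v. (\<lambda>w. \<sigma> w v) ` \<Omega>) V"
      using V(2) unfolding disjoint_family_on_def R_def W_def by blast
  qed fact+
qed

section \<open>The induced map on a sofic approximation\<close>

definition pullback :: "('m \<Rightarrow> 'd \<Rightarrow> 'd) \<Rightarrow> ('d \<Rightarrow> 'b) \<Rightarrow> 'd \<Rightarrow> 'm \<Rightarrow> 'b" where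
  "pullback \<sigma> z v = (\<lambda>m. z (\<sigma> m v))"

definition induced_map ::
    "(('m::monoid_mult \<Rightarrow> 'b) \<Rightarrow> ('m \<Rightarrow> 'b)) \<Rightarrow> 'd set \<Rightarrow> ('m \<Rightarrow> 'd \<Rightarrow> 'd) \<Rightarrow> ('d \<Rightarrow> 'b) \<Rightarrow> ('d \<Rightarrow> 'b)" where
  "induced_map \<tau> D \<sigma> z = (\<lambda>v\<in>D. \<tau> (pullback \<sigma> z v) 1)"

lemma pullback_in_configs:
  assumes "z \<in> D \<rightarrow>\<^sub>E A" and "\<And>m. \<sigma> m v \<in> D"
  shows "pullback \<sigma> z v \<in> configs A"
  using assms unfolding pullback_def configs_def by (auto intro: PiE_mem)

lemma induced_map_in_PiE:
  assumes "cellular_automaton A \<tau>" and "\<And>m v. v \<in> D \<Longrightarrow> \<sigma> m v \<in> D" and "z \<in> D \<rightarrow>\<^sub>E A"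
  shows "induced_map \<tau> D \<sigma> z \<in> D \<rightarrow>\<^sub>E A"
proof -
  have "\<tau> (pullback \<sigma> z v) 1 \<in> A" if "v \<in> D" for v
  proof -
    have "pullback \<sigma> z v \<in> configs A"
      by (rule pullback_in_configs[OF assms(3)]) (rule assms(2)[OF that])
    with assms(1) show ?thesis
      unfolding configs_def cellular_automaton_def by blast
  qed
  then show ?thesis
    unfolding induced_map_def by simp
qed

lemma induced_map_along_orbit:
  assumes "cellular_automaton A \<tau>" and "memory_set A \<tau> S"
    and maps: "\<And>m v. v \<in> D \<Longrightarrow> \<sigma> m v \<in> D" and "z \<in> D \<rightarrow>\<^sub>E A" and "v \<in> D"
    and mult: "\<And>s. s \<in> S \<Longrightarrow> \<sigma> (s * n) v = \<sigma> s (\<sigma> n v)"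
  shows "\<tau> (pullback \<sigma> z v) n = induced_map \<tau> D \<sigma> z (\<sigma> n v)"
proof -
  have x: "pullback \<sigma> z v \<in> configs A" and x': "pullback \<sigma> z (\<sigma> n v) \<in> configs A"
    by (rule pullback_in_configs[OF assms(4)]; use assms(5) maps in blast)+
  have "\<tau> (pullback \<sigma> z v) n = \<tau> (shift n (pullback \<sigma> z v)) 1"
    using assms(1) x by (rule cellular_automaton_apply_eq_shift)
  (* Multiplicativity at v makes both configurations agree on the memory set. *)
  also have "\<dots> = \<tau> (pullback \<sigma> z (\<sigma> n v)) 1"
    using assms(2) shift_in_configs[OF x] x' by (rule memory_setD) (simp add: mult shift_def pullback_def)
  also have "\<dots> = induced_map \<tau> D \<sigma> z (\<sigma> n v)"
    using maps[OF assms(5)] by (simp add: induced_map_def)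
  finally show ?thesis .
qed

lemma induced_map_determines:
  assumes "cellular_automaton A \<tau>" and "memory_set A \<tau> S" and "inverse_memory_set A \<tau> N"
    and maps: "\<And>m v. v \<in> D \<Longrightarrow> \<sigma> m v \<in> D" and z: "z \<in> D \<rightarrow>\<^sub>E A" and z': "z' \<in> D \<rightarrow>\<^sub>E A"
    and "v \<in> D" and "\<sigma> 1 v = v" and mult: "\<And>s n. s \<in> S \<Longrightarrow> n \<in> N \<Longrightarrow> \<sigma> (s * n) v = \<sigma> s (\<sigma> n v)"
    and "induced_map \<tau> D \<sigma> z = induced_map \<tau> D \<sigma> z'"
  shows "z v = z' v"
proof -
  have x: "pullback \<sigma> z v \<in> configs A" and x': "pullback \<sigma> z' v \<in> configs A"
    by (rule pullback_in_configs[OF z] pullback_in_configs[OF z']; rule maps[OF \<open>v \<in> D\<close>])+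
  have "\<tau> (pullback \<sigma> z v) n = \<tau> (pullback \<sigma> z' v) n" if "n \<in> N" for n
    using induced_map_along_orbit[OF assms(1,2) maps z \<open>v \<in> D\<close> mult[OF _ that]]
      induced_map_along_orbit[OF assms(1,2) maps z' \<open>v \<in> D\<close> mult[OF _ that]]
      assms(10) by simp
  with assms(3) x x' have "pullback \<sigma> z v 1 = pullback \<sigma> z' v 1"
    by (rule inverse_memory_setD)
  then show ?thesis
    using \<open>\<sigma> 1 v = v\<close> by (simp add: pullback_def)
qed

lemma induced_map_avoids_missing_window:
  assumes "cellular_automaton A \<tau>" and "memory_set A \<tau> S"
    and maps: "\<And>m v. v \<in> D \<Longrightarrow> \<sigma> m v \<in> D" and z: "z \<in> D \<rightarrow>\<^sub>E A" and "v \<in> D"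
    and mult: "\<And>s w. s \<in> S \<Longrightarrow> w \<in> \<Omega> \<Longrightarrow> \<sigma> (s * w) v = \<sigma> s (\<sigma> w v)"
    and missing: "\<And>x. x \<in> configs A \<Longrightarrow> \<exists>w\<in>\<Omega>. \<tau> x w \<noteq> y w"
  shows "\<exists>w\<in>\<Omega>. induced_map \<tau> D \<sigma> z (\<sigma> w v) \<noteq> y w"
proof -
  have "pullback \<sigma> z v \<in> configs A"
    by (rule pullback_in_configs[OF z]) (rule maps[OF \<open>v \<in> D\<close>])
  then obtain w where "w \<in> \<Omega>" and "\<tau> (pullback \<sigma> z v) w \<noteq> y w"
    using missing by blast
  moreover have "\<tau> (pullback \<sigma> z v) w = induced_map \<tau> D \<sigma> z (\<sigma> w v)"
    using assms(1,2) maps z \<open>v \<in> D\<close> mult[OF _ \<open>w \<in> \<Omega>\<close>] by (rule induced_map_along_orbit)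
  ultimately show ?thesis
    by auto
qed

lemma card_induced_map_image_ge:
  assumes "finite A" and "A \<noteq> {}" and "finite D" and "G \<subseteq> D"
    and ca: "cellular_automaton A \<tau>" and memory: "memory_set A \<tau> S"
    and inverse_memory: "inverse_memory_set A \<tau> N"
    and maps: "\<And>m v. v \<in> D \<Longrightarrow> \<sigma> m v \<in> D" and unit: "\<And>v. v \<in> D \<Longrightarrow> \<sigma> 1 v = v"
    and mult: "\<And>v s n. v \<in> G \<Longrightarrow> s \<in> S \<Longrightarrow> n \<in> N \<Longrightarrow> \<sigma> (s * n) v = \<sigma> s (\<sigma> n v)"
  shows "card A ^ card G \<le> card (induced_map \<tau> D \<sigma> ` (D \<rightarrow>\<^sub>E A))"
proof (rule card_PiE_le_card_image_if_determines[OF assms(3,1,2,4)])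
  fix z z' v
  assume "z \<in> D \<rightarrow>\<^sub>E A" and "z' \<in> D \<rightarrow>\<^sub>E A" and "induced_map \<tau> D \<sigma> z = induced_map \<tau> D \<sigma> z'"
    and "v \<in> G"
  moreover from \<open>v \<in> G\<close> \<open>G \<subseteq> D\<close> have "v \<in> D"
    by blast
  ultimately show "z v = z' v"
    using unit[OF \<open>v \<in> D\<close>] mult[OF \<open>v \<in> G\<close>]
    by (intro induced_map_determines[where \<sigma>=\<sigma>, OF ca memory inverse_memory maps])
qed

lemma card_induced_map_image_le:
  assumes "finite A" and "finite D" and "finite \<Omega>" and "V \<subseteq> D"
    and ca: "cellular_automaton A \<tau>" and memory: "memory_set A \<tau> S"
    and maps: "\<And>m v. v \<in> D \<Longrightarrow> \<sigma> m v \<in> D"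
    and "y \<in> configs A" and missing: "\<forall>x\<in>configs A. \<exists>w\<in>\<Omega>. \<tau> x w \<noteq> y w"
    and mult: "\<And>v s w. v \<in> V \<Longrightarrow> s \<in> S \<Longrightarrow> w \<in> \<Omega> \<Longrightarrow> \<sigma> (s * w) v = \<sigma> s (\<sigma> w v)"
    and inj: "\<And>v. v \<in> V \<Longrightarrow> inj_on (\<lambda>w. \<sigma> w v) \<Omega>"
    and disjoint: "disjoint_family_on (\<lambda>v. (\<lambda>w. \<sigma> w v) ` \<Omega>) V"
  shows "card (induced_map \<tau> D \<sigma> ` (D \<rightarrow>\<^sub>E A)) * card A ^ (card \<Omega> * card V)
    \<le> card A ^ card D * (card A ^ card \<Omega> - 1) ^ card V"
proof (rule card_pattern_avoiding_le[OF assms(2,1,3) _ _ inj _ disjoint])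
  show "finite V"
    using assms(2,4) by (rule finite_subset[rotated])
  show "induced_map \<tau> D \<sigma> ` (D \<rightarrow>\<^sub>E A) \<subseteq> D \<rightarrow>\<^sub>E A"
    using induced_map_in_PiE[where \<sigma>=\<sigma>, OF ca maps] by blast
  show "(\<lambda>w. \<sigma> w v) ` \<Omega> \<subseteq> D" if "v \<in> V" for v
    using maps that assms(4) by blast
  show "y \<in> \<Omega> \<rightarrow> A"
    using \<open>y \<in> configs A\<close> unfolding configs_def by blast
  show "\<exists>w\<in>\<Omega>. z (\<sigma> w v) \<noteq> y w" if "z \<in> induced_map \<tau> D \<sigma> ` (D \<rightarrow>\<^sub>E A)" and "v \<in> V" for z v
    using that assms(4) mult
      induced_map_avoids_missing_window[where \<sigma>=\<sigma>, OF ca memory maps _ _ _ bspec[OF missing]]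
    by blast
qed

lemma sofic_approximation_counting:
  fixes \<tau> :: "('m::monoid_mult \<Rightarrow> 'b) \<Rightarrow> ('m \<Rightarrow> 'b)"
  assumes approx: "sofic_approximation (S \<union> N \<union> \<Omega>) \<Delta> \<epsilon> D \<sigma>" and "0 \<le> \<epsilon>"
    and "finite A" and "A \<noteq> {}" and ca: "cellular_automaton A \<tau>"
    and "finite S" and memory: "memory_set A \<tau> S"
    and "finite N" and inverse_memory: "inverse_memory_set A \<tau> N"
    and "finite \<Omega>" and "\<Omega> \<noteq> {}" and "y \<in> configs A"
    and missing: "\<forall>x\<in>configs A. \<exists>w\<in>\<Omega>. \<tau> x w \<noteq> y w"
  obtains G V where "V \<subseteq> G" and "G \<subseteq> D"
    and "real (card (D - G)) \<le> 2 * real (card (S \<union> N \<union> \<Omega>)) ^ 2 * \<epsilon> * real (card D)"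
    and "card G \<le> card \<Omega> ^ 2 * \<Delta> * card V"
    and "card A ^ card G * card A ^ (card \<Omega> * card V) \<le> card A ^ card D * (card A ^ card \<Omega> - 1) ^ card V"
proof -
  let ?K = "S \<union> N \<union> \<Omega>"
  have "finite ?K"
    using \<open>finite S\<close> \<open>finite N\<close> \<open>finite \<Omega>\<close> by blast
  have "finite D"
    and maps: "\<And>m v. v \<in> D \<Longrightarrow> \<sigma> m v \<in> D" and unit: "\<And>v. v \<in> D \<Longrightarrow> \<sigma> 1 v = v"
    and mult: "\<And>k1 k2. k1 \<in> ?K \<Longrightarrow> k2 \<in> ?K \<Longrightarrow> ham D (\<sigma> (k1 * k2)) (\<sigma> k1 \<circ> \<sigma> k2) \<le> \<epsilon>"
    and sep: "\<And>k1 k2. k1 \<in> ?K \<Longrightarrow> k2 \<in> ?K \<Longrightarrow> k1 \<noteq> k2 \<Longrightarrow> 1 - \<epsilon> \<le> ham D (\<sigma> k1) (\<sigma> k2)"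
    and fibres: "\<And>w u. w \<in> \<Omega> \<Longrightarrow> u \<in> D \<Longrightarrow> card {v \<in> D. \<sigma> w v = u} \<le> \<Delta>"
    using approx unfolding sofic_approximation_def by (auto simp: Pi_iff)
  obtain G where "G \<subseteq> D" and bad: "real (card (D - G)) \<le> 2 * real (card ?K) ^ 2 * \<epsilon> * real (card D)"
    and good_mult: "\<And>v k1 k2. v \<in> G \<Longrightarrow> k1 \<in> ?K \<Longrightarrow> k2 \<in> ?K \<Longrightarrow> \<sigma> (k1 * k2) v = \<sigma> k1 (\<sigma> k2 v)"
    and good_inj: "\<And>v. v \<in> G \<Longrightarrow> inj_on (\<lambda>k. \<sigma> k v) ?K"
    by (rule sofic_approximation_good_set[OF \<open>finite D\<close> \<open>finite ?K\<close> \<open>0 \<le> \<epsilon>\<close> mult sep]) auto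
  obtain V where "V \<subseteq> G" and disjoint: "disjoint_family_on (\<lambda>v. (\<lambda>w. \<sigma> w v) ` \<Omega>) V"
    and packed: "card G \<le> card \<Omega> ^ 2 * \<Delta> * card V"
    by (rule disjoint_orbits_packing[OF \<open>finite D\<close> \<open>G \<subseteq> D\<close> \<open>finite \<Omega>\<close> \<open>\<Omega> \<noteq> {}\<close> maps fibres]) auto
  have lower: "card A ^ card G \<le> card (induced_map \<tau> D \<sigma> ` (D \<rightarrow>\<^sub>E A))"
  proof -
    have "\<And>v s n. v \<in> G \<Longrightarrow> s \<in> S \<Longrightarrow> n \<in> N \<Longrightarrow> \<sigma> (s * n) v = \<sigma> s (\<sigma> n v)"
      by (rule good_mult) auto
    with \<open>finite A\<close> \<open>A \<noteq> {}\<close> \<open>finite D\<close> \<open>G \<subseteq> D\<close> ca memory inverse_memory maps unit show ?thesis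
      by (rule card_induced_map_image_ge)
  qed
  have upper: "card (induced_map \<tau> D \<sigma> ` (D \<rightarrow>\<^sub>E A)) * card A ^ (card \<Omega> * card V)
      \<le> card A ^ card D * (card A ^ card \<Omega> - 1) ^ card V"
  proof -
    have "\<And>v s w. v \<in> V \<Longrightarrow> s \<in> S \<Longrightarrow> w \<in> \<Omega> \<Longrightarrow> \<sigma> (s * w) v = \<sigma> s (\<sigma> w v)"
      using \<open>V \<subseteq> G\<close> by (intro good_mult) auto
    moreover have "\<And>v. v \<in> V \<Longrightarrow> inj_on (\<lambda>w. \<sigma> w v) \<Omega>"
      using \<open>V \<subseteq> G\<close> good_inj by (blast intro: inj_on_subset)
    moreover have "V \<subseteq> D"
      using \<open>V \<subseteq> G\<close> \<open>G \<subseteq> D\<close> by blast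
    ultimately show ?thesis
      using \<open>finite A\<close> \<open>finite D\<close> \<open>finite \<Omega>\<close> ca memory maps \<open>y \<in> configs A\<close> missing disjoint
      by (intro card_induced_map_image_le)
  qed
  from lower upper have "card A ^ card G * card A ^ (card \<Omega> * card V)
      \<le> card A ^ card D * (card A ^ card \<Omega> - 1) ^ card V"
    by (meson le_trans mult_le_mono1)
  with \<open>V \<subseteq> G\<close> \<open>G \<subseteq> D\<close> bad packed show thesis
    by (rule that)
qed

lemma strongly_sofic_no_missing_window:
  fixes \<tau> :: "('m::monoid_mult \<Rightarrow> 'b) \<Rightarrow> ('m \<Rightarrow> 'b)"
  assumes sofic: "strongly_sofic TYPE('m)" and "finite A" and "card A \<ge> 2"
    and ca: "cellular_automaton A \<tau>"
    and "finite S" and memory: "memory_set A \<tau> S"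
    and "finite N" and inverse_memory: "inverse_memory_set A \<tau> N"
    and "finite \<Omega>" and "y \<in> configs A"
    and missing: "\<forall>x\<in>configs A. \<exists>w\<in>\<Omega>. \<tau> x w \<noteq> y w"
  shows False
proof -
  let ?K = "S \<union> N \<union> \<Omega>"
  have "\<Omega> \<noteq> {}"
    using missing \<open>y \<in> configs A\<close> by blast
  then have "card \<Omega> \<ge> 1" and "card ?K > 0"
    using \<open>finite S\<close> \<open>finite N\<close> \<open>finite \<Omega>\<close> by (auto simp: Suc_le_eq card_gt_0_iff)
  obtain \<Delta> where approximations: "\<And>\<epsilon>. \<epsilon> > 0 \<Longrightarrow> \<exists>D \<sigma>. sofic_approximation ?K \<Delta> \<epsilon> D \<sigma>"
    using sofic \<open>finite S\<close> \<open>finite N\<close> \<open>finite \<Omega>\<close> unfolding strongly_sofic_iff by blast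
  obtain \<eta> where "\<eta> > 0" and gap: "\<And>d g b n.
      card A ^ g * card A ^ (card \<Omega> * n) \<le> card A ^ d * (card A ^ card \<Omega> - 1) ^ n \<Longrightarrow>
      d \<le> g + b \<Longrightarrow> g \<le> card \<Omega> ^ 2 * \<Delta> * n \<Longrightarrow> real b \<le> \<eta> * real d \<Longrightarrow> d = 0"
    using counting_entropy_gap[OF \<open>card A \<ge> 2\<close> \<open>card \<Omega> \<ge> 1\<close>, of "card \<Omega> ^ 2 * \<Delta>"] by blast
  define \<epsilon> where "\<epsilon> = \<eta> / (2 * real (card ?K) ^ 2)"
  have "\<epsilon> > 0"
    using \<open>\<eta> > 0\<close> \<open>card ?K > 0\<close> unfolding \<epsilon>_def by simp
  then obtain D \<sigma> where approx: "sofic_approximation ?K \<Delta> \<epsilon> D \<sigma>"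
    using approximations by blast
  then have "finite D" and "D \<noteq> {}"
    unfolding sofic_approximation_def by auto
  have "A \<noteq> {}"
    using \<open>card A \<ge> 2\<close> by auto
  obtain G V where "V \<subseteq> G" and "G \<subseteq> D" and bad: "real (card (D - G)) \<le> 2 * real (card ?K) ^ 2 * \<epsilon> * real (card D)"
    and packed: "card G \<le> card \<Omega> ^ 2 * \<Delta> * card V"
    and count: "card A ^ card G * card A ^ (card \<Omega> * card V) \<le> card A ^ card D * (card A ^ card \<Omega> - 1) ^ card V"
    using sofic_approximation_counting[OF approx less_imp_le[OF \<open>\<epsilon> > 0\<close>] \<open>finite A\<close> \<open>A \<noteq> {}\<close> ca
        \<open>finite S\<close> memory \<open>finite N\<close> inverse_memory \<open>finite \<Omega>\<close> \<open>\<Omega> \<noteq> {}\<close> \<open>y \<in> configs A\<close> missing] .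
  have "card D \<le> card G + card (D - G)"
    using \<open>finite D\<close> \<open>G \<subseteq> D\<close> by (simp add: card_Diff_subset finite_subset)
  moreover have "real (card (D - G)) \<le> \<eta> * real (card D)"
    using bad \<open>card ?K > 0\<close> unfolding \<epsilon>_def by simp
  ultimately have "card D = 0"
    using gap[OF count _ packed] by blast
  with \<open>finite D\<close> \<open>D \<noteq> {}\<close> show False
    by simp
qed

theorem theorem1p1:
  assumes "strongly_sofic TYPE('m::monoid_mult)"
  shows "surjunctive TYPE('m)"
  unfolding surjunctive_def
proof (intro allI impI)
  fix A :: "nat set" and \<tau> :: "('m \<Rightarrow> nat) \<Rightarrow> ('m \<Rightarrow> nat)"
  assume "finite A" and ca: "cellular_automaton A \<tau>" and "inj_on \<tau> (configs A)"
  show "\<tau> ` configs A = configs A"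
  proof (rule ccontr)
    assume not_surj: "\<tau> ` configs A \<noteq> configs A"
    then obtain y where "y \<in> configs A" and y: "y \<notin> \<tau> ` configs A"
      using cellular_automaton_in_configs[OF ca] by blast
    have "card A \<ge> 2"
      using cellular_automaton_surj_if_card_le_one[OF \<open>finite A\<close> _ ca] not_surj by linarith
    obtain S where "finite S" and "memory_set A \<tau> S"
      using cellular_automaton_finite_memory_set[OF \<open>finite A\<close> ca] .
    obtain N where "finite N" and "inverse_memory_set A \<tau> N"
      using injective_cellular_automaton_finite_inverse_memory_set[OF \<open>finite A\<close> ca \<open>inj_on \<tau> (configs A)\<close>] .
    obtain \<Omega> where "finite \<Omega>" and "\<forall>x\<in>configs A. \<exists>w\<in>\<Omega>. \<tau> x w \<noteq> y w"
      using cellular_automaton_finite_missing_window[OF \<open>finite A\<close> ca y] .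
    show False
      by (rule strongly_sofic_no_missing_window) fact+
  qed
qed

end
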